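(* Let $X=\{1,\dots,n\}$, $Y$ finite, $Q$ a symmetric irreducible stochastic matrix on $Y$ (notation in context). Let $0\le k\le h\le n-1$ and let $\underline a=(a_0,\dots,a_m)$ be a type with $a_0+\cdots+a_m=h+1$ and $\ell(\underline a)\le k$; put $\underline a'=(a_0-1,a_1,\dots,a_m)$. Then every $F\in P_{h,\underline a',k}$ satisfies $$\Delta_hF=\big(|Y|(n+\ell(\underline a)-k-h)(h-k+1)-|Y|(n-h)\big)F.$$
   Context: $Q$ acts on $L(Y)$ by $(Qf)(y)=\sum_{y'}q(y,y')f(y')$, with distinct eigenvalues $\lambda_0=1,\dots,\lambda_m$ and eigenspaces $W_0$ (constants), $W_1,\dots,W_m$. For $0\le k\le n$, $\Theta_k$ is the set of functions $\theta$ with $\mathrm{dom}(\theta)$ a $k$-subset of $X$ and values in $Y$ ($\Theta_0$ = empty function); $\varphi\subseteq\theta$ means $\mathrm{dom}\varphi\subseteq\mathrm{dom}\theta$ and $\theta|_{\mathrm{dom}\varphi}=\varphi$. For $1\le k\le n$: $(D_kF)(\varphi)=\sum_{\theta\in\Theta_k:\theta\supseteq\varphi}F(\theta)$ ($D_k:L(\Theta_k)\to L(\Theta_{k-1})$) and $(D_k^*F)(\theta)=\sum_{\varphi\in\Theta_{k-1}:\varphi\subseteq\theta}F(\varphi)$; $D_0:=0$. $\Delta_h$ is the operator on $L(\Theta_h)$ given by $(\Delta_hF)(\theta)=\sum F(\varphi)$, the sum over all $\varphi\in\Theta_h$ with $|\mathrm{dom}\varphi\cap\mathrm{dom}\theta|=h-1$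 and $\varphi=\theta$ on $\mathrm{dom}\varphi\cap\mathrm{dom}\theta$. Types $\underline b=(b_0,\dots,b_m)$, $|\underline b|=\sum b_i$, $\ell(\underline b)=b_1+\cdots+b_m$, $\underline b'=(b_0-1,b_1,\dots,b_m)$. A fundamental function of type $\underline b$ on $A$, $|A|=|\underline b|$, is $F=\bigotimes_{j\in A}F^j$ ($F(\theta)=\prod_{j\in A}F^j(\theta(j))$ on $Y^A$, $0$ elsewhere) with each $F^j$ in some $W_{i_j}$ and exactly $b_i$ indices with $i_j=i$; $P_{k,\underline b,A}$ is their span, $P_{k,\underline b}=\bigoplus_{|A|=k}P_{k,\underline b,A}$ ($\{0\}$ if an entry is negative). $D_{k,\underline b}=D_k|_{P_{k,\underline b}}$, $D^*_{k,\underline b}=D^*_k|_{P_{k-1,\underline b'}}$. For $|\underline b|=k$: $P_{k,\underline b,k}=\ker D_{k,\underline b}$; for $k<h\le n$, $|\underline b|=h$, $\ell(\underline b)\le k$: $P_{h,\underline b,k}=D^*_{h,\underline b}(P_{h-1,\underline b',k})$. *)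

theory Defs
  imports "HOL-Analysis.Analysis" "HOL-Library.Function_Algebras"
begin

text \<open>Setting: X = {1..n}; Y is the finite type 'y (Y = UNIV); Q is given by the
  matrix q :: 'y \<Rightarrow> 'y \<Rightarrow> real. Functions on Theta_k are real-valued functions on maps
  which vanish outside Theta_k.\<close>

type_synonym 'y pfun = "nat \<Rightarrow> 'y option"
type_synonym 'y Lfun = "'y pfun \<Rightarrow> real"

definition Qop :: "('y::finite \<Rightarrow> 'y \<Rightarrow> real) \<Rightarrow> ('y \<Rightarrow> real) \<Rightarrow> ('y \<Rightarrow> real)" where
  "Qop q f = (\<lambda>y. \<Sum>y'\<in>UNIV. q y y' * f y')"

fun qpow :: "('y::finite \<Rightarrow> 'y \<Rightarrow> real) \<Rightarrow> nat \<Rightarrow> 'y \<Rightarrow> 'y \<Rightarrow> real" where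
  "qpow q 0 = (\<lambda>y y'. if y = y' then 1 else 0)"
| "qpow q (Suc t) = (\<lambda>y y'. \<Sum>z\<in>UNIV. q y z * qpow q t z y')"

definition symmetric_stochastic_irreducible :: "('y::finite \<Rightarrow> 'y \<Rightarrow> real) \<Rightarrow> bool" where
  "symmetric_stochastic_irreducible q \<longleftrightarrow>
     (\<forall>y y'. q y y' = q y' y) \<and>
     (\<forall>y y'. 0 \<le> q y y') \<and>
     (\<forall>y. (\<Sum>y'\<in>UNIV. q y y') = 1) \<and>
     (\<forall>y y'. \<exists>t. qpow q t y y' > 0)"

definition is_eigenvalue :: "('y::finite \<Rightarrow> 'y \<Rightarrow> real) \<Rightarrow> real \<Rightarrow> bool" where
  "is_eigenvalue q c \<longleftrightarrow> (\<exists>f. f \<noteq> 0 \<and> Qop q f = (\<lambda>y. c * f y))"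

definition eigen_enum :: "('y::finite \<Rightarrow> 'y \<Rightarrow> real) \<Rightarrow> nat \<Rightarrow> (nat \<Rightarrow> real) \<Rightarrow> bool" where
  "eigen_enum q m lam \<longleftrightarrow> lam 0 = 1 \<and> inj_on lam {0..m} \<and>
     {c. is_eigenvalue q c} = lam ` {0..m}"

definition Wsp :: "('y::finite \<Rightarrow> 'y \<Rightarrow> real) \<Rightarrow> (nat \<Rightarrow> real) \<Rightarrow> nat \<Rightarrow> ('y \<Rightarrow> real) set" where
  "Wsp q lam i = {f. Qop q f = (\<lambda>y. lam i * f y)}"

definition Theta :: "nat \<Rightarrow> nat \<Rightarrow> 'y pfun set" where
  "Theta n k = {\<theta>. dom \<theta> \<subseteq> {1..n} \<and> card (dom \<theta>) = k}"

definition Dop :: "nat \<Rightarrow> nat \<Rightarrow> 'y Lfun \<Rightarrow> 'y Lfun" where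
  "Dop n k F = (\<lambda>\<phi>. if k = 0 then 0 else if \<phi> \<in> Theta n (k - 1)
       then (\<Sum>\<theta>\<in>{\<theta> \<in> Theta n k. \<phi> \<subseteq>\<^sub>m \<theta>}. F \<theta>) else 0)"

definition Dstar :: "nat \<Rightarrow> nat \<Rightarrow> 'y Lfun \<Rightarrow> 'y Lfun" where
  "Dstar n k F = (\<lambda>\<theta>. if \<theta> \<in> Theta n k
       then (\<Sum>\<phi>\<in>{\<phi> \<in> Theta n (k - 1). \<phi> \<subseteq>\<^sub>m \<theta>}. F \<phi>) else 0)"

definition Delta :: "nat \<Rightarrow> nat \<Rightarrow> 'y Lfun \<Rightarrow> 'y Lfun" where
  "Delta n h F = (\<lambda>\<theta>. if \<theta> \<in> Theta n h
       then (\<Sum>\<phi>\<in>{\<phi> \<in> Theta n h. card (dom \<phi> \<inter> dom \<theta>) + 1 = h \<and>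
                         (\<forall>j\<in>dom \<phi> \<inter> dom \<theta>. \<phi> j = \<theta> j)}. F \<phi>) else 0)"

text \<open>Types b = (b_0,...,b_m) are represented as b :: nat \<Rightarrow> int (entries at 0..m).\<close>
definition tsize :: "nat \<Rightarrow> (nat \<Rightarrow> int) \<Rightarrow> int" where
  "tsize m b = (\<Sum>i=0..m. b i)"

definition tlen :: "nat \<Rightarrow> (nat \<Rightarrow> int) \<Rightarrow> int" where
  "tlen m b = (\<Sum>i=1..m. b i)"

definition tprime :: "(nat \<Rightarrow> int) \<Rightarrow> (nat \<Rightarrow> int)" where
  "tprime b = b(0 := b 0 - 1)"

definition fundamental ::
  "('y::finite \<Rightarrow> 'y \<Rightarrow> real) \<Rightarrow> nat \<Rightarrow> (nat \<Rightarrow> real) \<Rightarrow> (nat \<Rightarrow> int) \<Rightarrow> nat set \<Rightarrow> 'y Lfun set" where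
  "fundamental q m lam b A = {F. \<exists>(Fj :: nat \<Rightarrow> 'y \<Rightarrow> real) (ij :: nat \<Rightarrow> nat).
      (\<forall>j\<in>A. ij j \<le> m \<and> Fj j \<in> Wsp q lam (ij j)) \<and>
      (\<forall>i\<le>m. int (card {j\<in>A. ij j = i}) = b i) \<and>
      F = (\<lambda>\<theta>. if dom \<theta> = A then (\<Prod>j\<in>A. Fj j (the (\<theta> j))) else 0)}"

definition fun_span :: "'y Lfun set \<Rightarrow> 'y Lfun set" where
  "fun_span S = module.span (\<lambda>(c::real) (f::'y Lfun). (\<lambda>x. c * f x)) S"

text \<open>P_{k,b} = direct sum over k-subsets A of X of P_{k,b,A} (= span of the union);
  it is {0} if some entry of b is negative (no fundamental functions exist then).\<close>
definition Pkb ::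
  "('y::finite \<Rightarrow> 'y \<Rightarrow> real) \<Rightarrow> nat \<Rightarrow> (nat \<Rightarrow> real) \<Rightarrow> nat \<Rightarrow> nat \<Rightarrow> (nat \<Rightarrow> int) \<Rightarrow> 'y Lfun set" where
  "Pkb q m lam n k b = fun_span (\<Union>A\<in>{A. A \<subseteq> {1..n} \<and> card A = k}. fundamental q m lam b A)"

text \<open>Phk q m lam n k d b = P_{k+d, b, k}.\<close>
fun Phk ::
  "('y::finite \<Rightarrow> 'y \<Rightarrow> real) \<Rightarrow> nat \<Rightarrow> (nat \<Rightarrow> real) \<Rightarrow> nat \<Rightarrow> nat \<Rightarrow> nat \<Rightarrow> (nat \<Rightarrow> int) \<Rightarrow> 'y Lfun set" where
  "Phk q m lam n k 0 b = {F \<in> Pkb q m lam n k b. Dop n k F = 0}"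
| "Phk q m lam n k (Suc d) b = Dstar n (k + Suc d) ` Phk q m lam n k d (tprime b)"

definition Phbk ::
  "('y::finite \<Rightarrow> 'y \<Rightarrow> real) \<Rightarrow> nat \<Rightarrow> (nat \<Rightarrow> real) \<Rightarrow> nat \<Rightarrow> nat \<Rightarrow> (nat \<Rightarrow> int) \<Rightarrow> nat \<Rightarrow> 'y Lfun set" where
  "Phbk q m lam n h b k = Phk q m lam n k (h - k) b"

end

theory Submission
  imports Defs
begin

text \<open>Let \<open>resample F \<theta> = \<Sum>\<^bsub>z \<in> dom \<theta>\<^esub> \<Sum>\<^bsub>y \<in> Y\<^esub> F (\<theta>(z \<mapsto> y))\<close> resample one coordinate of \<open>\<theta>\<close>.
  Counting how the neighbours of \<open>\<theta>\<close> arise gives, on \<open>L(\<Theta>\<^sub>j)\<close>,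
  \<open>D\<^sub>j\<^sub>+\<^sub>1 D\<^sup>*\<^sub>j\<^sub>+\<^sub>1 = |Y|(n - j) + \<Delta>\<^sub>j\<close> and \<open>D\<^sup>*\<^sub>j D\<^sub>j = resample + \<Delta>\<^sub>j\<close>, hence the commutation relation
  \<open>D\<^sub>j\<^sub>+\<^sub>1 D\<^sup>*\<^sub>j\<^sub>+\<^sub>1 = D\<^sup>*\<^sub>j D\<^sub>j + |Y|(n - j) - resample\<close>. Since \<open>Q\<close> is symmetric and stochastic, an
  eigenfunction for an eigenvalue \<open>\<noteq> 1\<close> sums to zero, and by irreducibility the eigenvalue \<open>1\<close>
  has only constant eigenfunctions; so \<open>resample\<close> acts on \<open>P\<^sub>k\<^sub>,\<^sub>b\<close> as the scalar \<open>|Y| b\<^sub>0\<close>, and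
  \<open>resample \<circ> D\<^sup>* = D\<^sup>* \<circ> (resample + |Y|)\<close>. Induction on \<open>h - k\<close> then shows that \<open>D D\<^sup>*\<close> acts on
  \<open>P\<^sub>h\<^sub>,\<^sub>b\<^sub>,\<^sub>k\<close> as the scalar \<open>|Y|(h - k + 1)(n - k - b\<^sub>0)\<close>, and \<open>\<Delta>\<^sub>h = D\<^sub>h\<^sub>+\<^sub>1 D\<^sup>*\<^sub>h\<^sub>+\<^sub>1 - |Y|(n - h)\<close> with
  \<open>b = a'\<close> gives the formula.\<close>

section \<open>Eigenfunctions of \<open>Q\<close>\<close>

lemma sum_Qop:
  assumes "symmetric_stochastic_irreducible q"
  shows "(\<Sum>y\<in>UNIV. Qop q f y) = (\<Sum>y\<in>UNIV. f y)"
proof -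
  have sym: "\<And>y y'. q y y' = q y' y" and rows: "\<And>y. (\<Sum>y'\<in>UNIV. q y y') = 1"
    using assms unfolding symmetric_stochastic_irreducible_def by auto
  have cols: "(\<Sum>y\<in>UNIV. q y y') = 1" for y'
    using rows[of y'] by (simp add: sym)
  have "(\<Sum>y\<in>UNIV. Qop q f y) = (\<Sum>y'\<in>UNIV. \<Sum>y\<in>UNIV. q y y' * f y')"
    unfolding Qop_def by (rule sum.swap)
  also have "\<dots> = (\<Sum>y'\<in>UNIV. f y')"
    by (simp add: sum_distrib_right[symmetric] cols)
  finally show ?thesis .
qed

text \<open>The Dirichlet form \<open>\<Sum>\<^sub>y\<^sub>,\<^sub>y\<^sub>' q y y' (f y - f y')\<^sup>2\<close> of a \<open>Q\<close>-harmonic function vanishes.\<close>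
lemma harmonic_constant_on_edges:
  assumes "symmetric_stochastic_irreducible q"
    and harmonic: "\<And>y. (\<Sum>y'\<in>UNIV. q y y' * f y') = f y" and "q y y' > 0"
  shows "f y = f y'"
proof -
  have sym: "\<And>y y'. q y y' = q y' y" and nn: "\<And>y y'. 0 \<le> q y y'"
    and rows: "\<And>y. (\<Sum>y'\<in>UNIV. q y y') = 1"
    using assms(1) unfolding symmetric_stochastic_irreducible_def by auto
  have sq_f: "(\<Sum>y\<in>UNIV. \<Sum>y'\<in>UNIV. q y y' * (f y)\<^sup>2) = (\<Sum>y\<in>UNIV. (f y)\<^sup>2)"
    by (simp add: sum_distrib_right[symmetric] rows)
  have sq_f': "(\<Sum>y\<in>UNIV. \<Sum>y'\<in>UNIV. q y y' * (f y')\<^sup>2) = (\<Sum>y\<in>UNIV. (f y)\<^sup>2)"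
    by (subst sum.swap) (simp add: sym sum_distrib_right[symmetric] rows)
  have cross: "(\<Sum>y\<in>UNIV. \<Sum>y'\<in>UNIV. q y y' * (f y * f y')) = (\<Sum>y\<in>UNIV. (f y)\<^sup>2)"
    using harmonic by (simp add: power2_eq_square sum_distrib_left[symmetric] mult.left_commute)
  have "(\<Sum>y\<in>UNIV. \<Sum>y'\<in>UNIV. q y y' * (f y - f y')\<^sup>2)
      = (\<Sum>y\<in>UNIV. \<Sum>y'\<in>UNIV. q y y' * (f y)\<^sup>2) + (\<Sum>y\<in>UNIV. \<Sum>y'\<in>UNIV. q y y' * (f y')\<^sup>2)
        - 2 * (\<Sum>y\<in>UNIV. \<Sum>y'\<in>UNIV. q y y' * (f y * f y'))"
    by (simp add: power2_diff algebra_simps sum.distrib sum_subtractf sum_distrib_left)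
  then have "(\<Sum>y\<in>UNIV. \<Sum>y'\<in>UNIV. q y y' * (f y - f y')\<^sup>2) = 0"
    by (simp add: sq_f sq_f' cross)
  then have "(\<Sum>y'\<in>UNIV. q y y' * (f y - f y')\<^sup>2) = 0"
    by (subst (asm) sum_nonneg_eq_0_iff) (auto intro!: sum_nonneg simp: nn)
  then have "q y y' * (f y - f y')\<^sup>2 = 0"
    by (subst (asm) sum_nonneg_eq_0_iff) (auto simp: nn)
  with \<open>q y y' > 0\<close> show ?thesis by simp
qed

lemma Wsp_0_constant:
  assumes ssi: "symmetric_stochastic_irreducible q" and "eigen_enum q m lam" "f \<in> Wsp q lam 0"
  shows "f y = f y'"
proof -
  have nn: "\<And>y y'. 0 \<le> q y y'" and irr: "\<And>y y'. \<exists>t. qpow q t y y' > 0"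
    using ssi unfolding symmetric_stochastic_irreducible_def by auto
  have harmonic: "\<And>y. (\<Sum>y'\<in>UNIV. q y y' * f y') = f y"
    using assms(2,3) unfolding Wsp_def eigen_enum_def Qop_def by (auto dest: fun_cong)
  have path: "qpow q t y y' > 0 \<Longrightarrow> f y = f y'" for t y y'
  proof (induction t arbitrary: y)
    case 0
    then show ?case by (simp split: if_splits)
  next
    case (Suc t)
    then obtain z where "q y z * qpow q t z y' > 0"
      by (metis (no_types, lifting) qpow.simps(2) not_le sum_nonpos)
    then have "q y z > 0" "qpow q t z y' > 0"
      using nn[of y z] by (auto simp: zero_less_mult_iff)
    then show ?case using harmonic_constant_on_edges[OF ssi harmonic] Suc.IH by metis
  qed
  obtain t where "qpow q t y y' > 0" using irr by blast
  then show ?thesis by (rule path)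
qed

lemma sum_Wsp:
  fixes q :: "'y::finite \<Rightarrow> 'y \<Rightarrow> real"
  assumes ssi: "symmetric_stochastic_irreducible q" and ee: "eigen_enum q m lam"
    and "i \<le> m" "f \<in> Wsp q lam i"
  shows "(\<Sum>y\<in>UNIV. f y) = (if i = 0 then real CARD('y) * f y0 else 0)"
proof (cases "i = 0")
  case True
  then have "(\<Sum>y\<in>UNIV. f y) = (\<Sum>y::'y\<in>UNIV. f y0)"
    using Wsp_0_constant[OF ssi ee] assms(4) by (intro sum.cong) simp_all
  with True show ?thesis by simp
next
  case False
  have "lam i \<noteq> lam 0"
    using ee False \<open>i \<le> m\<close> unfolding eigen_enum_def by (metis atLeastAtMost_iff inj_on_eq_iff le0)
  then have "lam i \<noteq> 1" using ee by (simp add: eigen_enum_def)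
  have "(\<Sum>y\<in>UNIV. f y) = (\<Sum>y\<in>UNIV. Qop q f y)" by (rule sum_Qop[OF ssi, symmetric])
  also have "\<dots> = lam i * (\<Sum>y\<in>UNIV. f y)"
    using assms(4) by (simp add: Wsp_def sum_distrib_left)
  finally have "(1 - lam i) * (\<Sum>y\<in>UNIV. f y) = 0" by (simp add: algebra_simps)
  with \<open>lam i \<noteq> 1\<close> False show ?thesis by simp
qed

section \<open>Partial maps\<close>

lemma restrict_compl_upd_same: "(\<theta> |` (- {w}))(w \<mapsto> y) = \<theta>(w \<mapsto> y)"
  by (rule ext) (auto simp: restrict_map_def)

lemma restrict_compl_upd_other: "x \<noteq> w \<Longrightarrow> (\<theta> |` (- {w}))(x \<mapsto> y) = \<theta>(x \<mapsto> y) |` (- {w})"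
  by (rule ext) (auto simp: restrict_map_def)

lemma restrict_compl_notin_dom: "x \<notin> dom \<theta> \<Longrightarrow> \<theta> |` (- {x}) = \<theta>"
  by (rule ext) (auto simp: restrict_map_def)

lemma dom_restrict_compl: "dom (\<theta> |` (- {w})) = dom \<theta> - {w}"
  by auto

lemma map_le_card_dom_Suc_obtains_upd:
  assumes le: "\<phi> \<subseteq>\<^sub>m \<theta>" and fin: "finite (dom \<theta>)"
    and card: "card (dom \<theta>) = Suc (card (dom \<phi>))"
  obtains x where "x \<notin> dom \<phi>" "x \<in> dom \<theta>" "\<theta> = \<phi>(x \<mapsto> the (\<theta> x))"
proof -
  have "dom \<phi> \<subseteq> dom \<theta>" using le by (rule map_le_implies_dom_le)
  then have "card (dom \<theta> - dom \<phi>) = 1"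
    using card fin by (simp add: card_Diff_subset finite_subset)
  then obtain x where x: "dom \<theta> - dom \<phi> = {x}" by (auto simp: card_1_singleton_iff)
  then have "x \<in> dom \<theta>" by blast
  have "\<theta> z = (\<phi>(x \<mapsto> the (\<theta> x))) z" for z
  proof (cases "z = x")
    case True
    then show ?thesis using \<open>x \<in> dom \<theta>\<close> by auto
  next
    case False
    show ?thesis
    proof (cases "z \<in> dom \<phi>")
      case True
      then show ?thesis using le False by (auto simp: map_le_def)
    next
      case z: False
      then have "z \<notin> dom \<theta>" using x False by blast
      then show ?thesis using z False by (simp add: domIff)
    qed
  qed
  then have "\<theta> = \<phi>(x \<mapsto> the (\<theta> x))" by (rule ext)
  moreover have "x \<notin> dom \<phi>" using x by blast
  ultimately show ?thesis using that \<open>x \<in> dom \<theta>\<close> by blast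
qed

lemma Theta_memD:
  assumes "\<theta> \<in> Theta n j"
  shows "finite (dom \<theta>)" "dom \<theta> \<subseteq> {1..n}" "card (dom \<theta>) = j"
  using assms by (auto simp: Theta_def intro: finite_subset)

lemma inj_on_swap:
  "inj_on (\<lambda>(x, y, w). \<theta>(x \<mapsto> y) |` (- {w})) ((- dom \<theta>) \<times> UNIV \<times> dom \<theta>)"
proof (rule inj_onI)
  fix p p' assume "p \<in> (- dom \<theta>) \<times> UNIV \<times> dom \<theta>" "p' \<in> (- dom \<theta>) \<times> UNIV \<times> dom \<theta>"
    and eq: "(\<lambda>(x, y, w). \<theta>(x \<mapsto> y) |` (- {w})) p = (\<lambda>(x, y, w). \<theta>(x \<mapsto> y) |` (- {w})) p'"
  moreover obtain x y w where p: "p = (x, y, w)" by (cases p rule: prod_cases3)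
  moreover obtain x' y' w' where p': "p' = (x', y', w')" by (cases p' rule: prod_cases3)
  ultimately have dom: "x \<notin> dom \<theta>" "x' \<notin> dom \<theta>" "w \<in> dom \<theta>" "w' \<in> dom \<theta>"
    and eq: "\<theta>(x \<mapsto> y) |` (- {w}) = \<theta>(x' \<mapsto> y') |` (- {w'})" by auto
  have "x \<noteq> w" "x \<noteq> w'" "x' \<noteq> w" using dom by auto
  then have "Some y = (if x = x' then Some y' else \<theta> x)"
    using fun_cong[OF eq, of x] by simp
  then have "x = x'" "y = y'" using dom(1) by (auto simp: domIff split: if_splits)
  moreover have "w = w'"
    using fun_cong[OF eq, of w] dom \<open>x' \<noteq> w\<close> by (auto simp: domIff restrict_map_def split: if_splits)
  ultimately show "p = p'" using p p' by simp
qed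

lemma swap_mem_Delta_neighbours:
  assumes \<theta>: "\<theta> \<in> Theta n h" and x: "x \<in> {1..n}" "x \<notin> dom \<theta>" and w: "w \<in> dom \<theta>"
  shows "\<theta>(x \<mapsto> y) |` (- {w})
    \<in> {\<phi> \<in> Theta n h. card (dom \<phi> \<inter> dom \<theta>) + 1 = h \<and> (\<forall>j\<in>dom \<phi> \<inter> dom \<theta>. \<phi> j = \<theta> j)}"
proof -
  note \<theta>_facts = Theta_memD[OF \<theta>]
  define \<phi> where "\<phi> = \<theta>(x \<mapsto> y) |` (- {w})"
  have "x \<noteq> w" using x w by auto
  then have dom_\<phi>: "dom \<phi> = insert x (dom \<theta> - {w})" by (auto simp: \<phi>_def)
  have card_common: "card (dom \<theta> - {w}) + 1 = h"
    using w \<theta>_facts by (simp add: card_Diff_singleton) (metis Suc_pred card_gt_0_iff empty_iff)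
  have common: "dom \<phi> \<inter> dom \<theta> = dom \<theta> - {w}" using dom_\<phi> x by auto
  have "\<phi> j = \<theta> j" if "j \<in> dom \<theta> - {w}" for j
    using that x(2) by (auto simp: \<phi>_def restrict_map_def)
  moreover have "card (dom \<phi>) = h" "dom \<phi> \<subseteq> {1..n}"
    using dom_\<phi> card_common x \<theta>_facts by auto
  ultimately show ?thesis
    unfolding \<phi>_def[symmetric] using card_common common by (simp add: Theta_def)
qed

lemma Delta_neighbour_obtains_swap:
  assumes \<theta>: "\<theta> \<in> Theta n h" and \<phi>: "\<phi> \<in> Theta n h"
    and common: "card (dom \<phi> \<inter> dom \<theta>) + 1 = h" and agree: "\<forall>j\<in>dom \<phi> \<inter> dom \<theta>. \<phi> j = \<theta> j"
  obtains x y w where "x \<in> {1..n}" "x \<notin> dom \<theta>" "w \<in> dom \<theta>" "\<phi> = \<theta>(x \<mapsto> y) |` (- {w})"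
proof -
  note \<theta>_facts = Theta_memD[OF \<theta>] and \<phi>_facts = Theta_memD[OF \<phi>]
  have "card (dom \<phi> - dom \<theta>) = 1"
    using \<phi>_facts common by (simp add: card_Diff_subset_Int)
  then obtain x where x: "dom \<phi> - dom \<theta> = {x}" by (auto simp: card_1_singleton_iff)
  have "card (dom \<theta> - dom \<phi>) = card (dom \<theta>) - card (dom \<theta> \<inter> dom \<phi>)"
    using \<theta>_facts(1) by (simp add: card_Diff_subset_Int)
  also have "dom \<theta> \<inter> dom \<phi> = dom \<phi> \<inter> dom \<theta>" by blast
  finally have "card (dom \<theta> - dom \<phi>) = 1" using \<theta>_facts(3) common by simp
  then obtain w where w: "dom \<theta> - dom \<phi> = {w}" by (auto simp: card_1_singleton_iff)
  have xw: "x \<in> dom \<phi>" "x \<notin> dom \<theta>" "w \<in> dom \<theta>" "w \<notin> dom \<phi>" using x w by blast+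
  obtain y where y: "\<phi> x = Some y" using xw(1) by blast
  have "\<phi> z = (\<theta>(x \<mapsto> y) |` (- {w})) z" for z
  proof (cases "z = w \<or> z = x")
    case True
    then show ?thesis using xw(1,4) y by (auto simp: domIff)
  next
    case False
    then have "z \<in> dom \<phi> \<longleftrightarrow> z \<in> dom \<theta>" using x w by blast
    moreover have "(\<theta>(x \<mapsto> y) |` (- {w})) z = \<theta> z" using False by simp
    ultimately show ?thesis using agree by (metis IntI domIff)
  qed
  then have "\<phi> = \<theta>(x \<mapsto> y) |` (- {w})" by (rule ext)
  moreover have "x \<in> {1..n}" using xw(1) \<phi>_facts(2) by blast
  ultimately show ?thesis using xw(2,3) that by simp
qed

lemma swap_image_eq:
  assumes \<theta>: "\<theta> \<in> Theta n h"
  shows "(\<lambda>(x, y, w). \<theta>(x \<mapsto> y) |` (- {w})) ` (({1..n} - dom \<theta>) \<times> UNIV \<times> dom \<theta>)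
    = {\<phi> \<in> Theta n h. card (dom \<phi> \<inter> dom \<theta>) + 1 = h \<and> (\<forall>j\<in>dom \<phi> \<inter> dom \<theta>. \<phi> j = \<theta> j)}"
    (is "?f ` ?A = ?N")
proof (intro set_eqI iffI)
  fix \<phi> assume "\<phi> \<in> ?f ` ?A"
  then obtain x y w where x: "x \<in> {1..n}" "x \<notin> dom \<theta>" and w: "w \<in> dom \<theta>"
    and \<phi>: "\<phi> = \<theta>(x \<mapsto> y) |` (- {w})"
    by fast
  show "\<phi> \<in> ?N" unfolding \<phi> by (rule swap_mem_Delta_neighbours[OF \<theta> x w])
next
  fix \<phi> assume "\<phi> \<in> ?N"
  then have "\<phi> \<in> Theta n h" "card (dom \<phi> \<inter> dom \<theta>) + 1 = h" "\<forall>j\<in>dom \<phi> \<inter> dom \<theta>. \<phi> j = \<theta> j"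
    by auto
  then obtain x y w where "x \<in> {1..n}" "x \<notin> dom \<theta>" "w \<in> dom \<theta>" "\<phi> = \<theta>(x \<mapsto> y) |` (- {w})"
    by (rule Delta_neighbour_obtains_swap[OF \<theta>])
  then show "\<phi> \<in> ?f ` ?A" by (intro image_eqI[of _ _ "(x, y, w)"]) simp_all
qed

section \<open>The operators \<open>D\<close>, \<open>D\<^sup>*\<close>, \<open>\<Delta>\<close> and resampling\<close>

definition Theta_supported :: "nat \<Rightarrow> nat \<Rightarrow> 'y Lfun \<Rightarrow> bool" where
  "Theta_supported n j F \<longleftrightarrow> (\<forall>\<theta>. \<theta> \<notin> Theta n j \<longrightarrow> F \<theta> = 0)"

lemma Theta_supported_Dstar: "Theta_supported n j (Dstar n j G)"
  by (simp add: Theta_supported_def Dstar_def)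

lemma Dstar_scale: "Dstar n j (\<lambda>\<theta>. c * G \<theta>) = (\<lambda>\<theta>. c * Dstar n j G \<theta>)"
  by (simp add: Dstar_def sum_distrib_left fun_eq_iff)

lemma Dstar_eq_sum_delete:
  assumes \<theta>: "\<theta> \<in> Theta n j" and j: "1 \<le> j"
  shows "Dstar n j G \<theta> = (\<Sum>w\<in>dom \<theta>. G (\<theta> |` (- {w})))"
proof -
  note \<theta>_facts = Theta_memD[OF \<theta>]
  have bij: "bij_betw (\<lambda>w. \<theta> |` (- {w})) (dom \<theta>) {\<phi> \<in> Theta n (j - 1). \<phi> \<subseteq>\<^sub>m \<theta>}"
  proof (rule bij_betw_imageI)
    show "inj_on (\<lambda>w. \<theta> |` (- {w})) (dom \<theta>)"
      by (rule inj_onI) (metis ComplD ComplI domD insertI1 option.distinct(1) restrict_map_def singletonD)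
    show "(\<lambda>w. \<theta> |` (- {w})) ` dom \<theta> = {\<phi> \<in> Theta n (j - 1). \<phi> \<subseteq>\<^sub>m \<theta>}"
    proof (intro set_eqI iffI)
      fix \<phi> assume "\<phi> \<in> (\<lambda>w. \<theta> |` (- {w})) ` dom \<theta>"
      then obtain w where w: "w \<in> dom \<theta>" "\<phi> = \<theta> |` (- {w})" by auto
      then have "dom \<phi> = dom \<theta> - {w}" by auto
      then show "\<phi> \<in> {\<phi> \<in> Theta n (j - 1). \<phi> \<subseteq>\<^sub>m \<theta>}"
        using w \<theta>_facts by (auto simp: Theta_def map_le_def)
    next
      fix \<phi> assume "\<phi> \<in> {\<phi> \<in> Theta n (j - 1). \<phi> \<subseteq>\<^sub>m \<theta>}"
      then have le: "\<phi> \<subseteq>\<^sub>m \<theta>" and "card (dom \<phi>) = j - 1" by (auto simp: Theta_def)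
      then obtain x where x: "x \<notin> dom \<phi>" "x \<in> dom \<theta>" "\<theta> = \<phi>(x \<mapsto> the (\<theta> x))"
        using map_le_card_dom_Suc_obtains_upd[OF le \<theta>_facts(1)] \<theta>_facts(3) j by auto
      then have "\<phi> = \<theta> |` (- {x})"
        by (metis restrict_compl_notin_dom restrict_upd_same)
      then show "\<phi> \<in> (\<lambda>w. \<theta> |` (- {w})) ` dom \<theta>" using x by auto
    qed
  qed
  show ?thesis
    using \<theta> sum.reindex_bij_betw[OF bij, of G] by (simp add: Dstar_def)
qed

lemma Dop_Suc_eq_sum_upd:
  assumes \<phi>: "\<phi> \<in> Theta n i"
  shows "Dop n (Suc i) F \<phi> = (\<Sum>x\<in>{1..n} - dom \<phi>. \<Sum>y\<in>UNIV. F (\<phi>(x \<mapsto> y)))"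
proof -
  note \<phi>_facts = Theta_memD[OF \<phi>]
  have "bij_betw (\<lambda>(x, y). \<phi>(x \<mapsto> y)) (({1..n} - dom \<phi>) \<times> UNIV) {\<theta> \<in> Theta n (Suc i). \<phi> \<subseteq>\<^sub>m \<theta>}"
  proof (rule bij_betw_imageI)
    have "x = x' \<and> y = y'" if "x \<notin> dom \<phi>" "\<phi>(x \<mapsto> y) = \<phi>(x' \<mapsto> y')" for x y x' y'
      using that(1) fun_cong[OF that(2), of x] by (auto simp: domIff split: if_splits)
    then show "inj_on (\<lambda>(x, y). \<phi>(x \<mapsto> y)) (({1..n} - dom \<phi>) \<times> UNIV)"
      by (auto simp: inj_on_def)
    show "(\<lambda>(x, y). \<phi>(x \<mapsto> y)) ` (({1..n} - dom \<phi>) \<times> UNIV) = {\<theta> \<in> Theta n (Suc i). \<phi> \<subseteq>\<^sub>m \<theta>}"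
    proof (intro set_eqI iffI)
      fix \<theta> assume "\<theta> \<in> (\<lambda>(x, y). \<phi>(x \<mapsto> y)) ` (({1..n} - dom \<phi>) \<times> UNIV)"
      then obtain x y where "x \<in> {1..n}" "x \<notin> dom \<phi>" "\<theta> = \<phi>(x \<mapsto> y)" by fast
      then show "\<theta> \<in> {\<theta> \<in> Theta n (Suc i). \<phi> \<subseteq>\<^sub>m \<theta>}"
        using \<phi>_facts by (auto simp: Theta_def map_le_def)
    next
      fix \<theta> assume "\<theta> \<in> {\<theta> \<in> Theta n (Suc i). \<phi> \<subseteq>\<^sub>m \<theta>}"
      then have le: "\<phi> \<subseteq>\<^sub>m \<theta>" and \<theta>: "\<theta> \<in> Theta n (Suc i)" by auto
      obtain x where x: "x \<notin> dom \<phi>" "x \<in> dom \<theta>" "\<theta> = \<phi>(x \<mapsto> the (\<theta> x))"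
        using map_le_card_dom_Suc_obtains_upd[OF le] Theta_memD[OF \<theta>] \<phi>_facts by metis
      then show "\<theta> \<in> (\<lambda>(x, y). \<phi>(x \<mapsto> y)) ` (({1..n} - dom \<phi>) \<times> UNIV)"
        using Theta_memD(2)[OF \<theta>] by (intro image_eqI[of _ _ "(x, the (\<theta> x))"]) auto
    qed
  qed
  then have "(\<Sum>\<theta>\<in>{\<theta> \<in> Theta n (Suc i). \<phi> \<subseteq>\<^sub>m \<theta>}. F \<theta>)
      = (\<Sum>(x, y)\<in>({1..n} - dom \<phi>) \<times> UNIV. F (\<phi>(x \<mapsto> y)))"
    by (simp add: sum.reindex_bij_betw[symmetric] case_prod_unfold)
  then show ?thesis
    using \<phi> by (simp add: Dop_def sum.cartesian_product)
qed

lemma Delta_eq_sum_swaps: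
  assumes \<theta>: "\<theta> \<in> Theta n h"
  shows "Delta n h F \<theta> = (\<Sum>x\<in>{1..n} - dom \<theta>. \<Sum>y\<in>UNIV. \<Sum>w\<in>dom \<theta>. F (\<theta>(x \<mapsto> y) |` (- {w})))"
proof -
  have "bij_betw (\<lambda>(x, y, w). \<theta>(x \<mapsto> y) |` (- {w})) (({1..n} - dom \<theta>) \<times> UNIV \<times> dom \<theta>)
      {\<phi> \<in> Theta n h. card (dom \<phi> \<inter> dom \<theta>) + 1 = h \<and> (\<forall>j\<in>dom \<phi> \<inter> dom \<theta>. \<phi> j = \<theta> j)}"
    by (rule bij_betw_imageI[OF inj_on_subset[OF inj_on_swap] swap_image_eq[OF \<theta>]]) auto
  from sum.reindex_bij_betw[OF this, of F] show ?thesis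
    using \<theta> by (simp add: Delta_def sum.cartesian_product case_prod_unfold)
qed

definition resample :: "'y::finite Lfun \<Rightarrow> 'y Lfun" where
  "resample F = (\<lambda>\<theta>. \<Sum>z\<in>dom \<theta>. \<Sum>y\<in>UNIV. F (\<theta>(z \<mapsto> y)))"

lemma resample_Theta_supported:
  assumes "Theta_supported n j F"
  shows "Theta_supported n j (resample F)"
proof -
  have "F (\<theta>(z \<mapsto> y)) = 0" if "\<theta> \<notin> Theta n j" "z \<in> dom \<theta>" for \<theta> z y
  proof -
    have "\<theta>(z \<mapsto> y) \<notin> Theta n j"
      using that by (auto simp: Theta_def insert_absorb)
    then show ?thesis using assms by (simp add: Theta_supported_def)
  qed
  then show ?thesis
    unfolding Theta_supported_def resample_def by (simp add: sum.neutral)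
qed

lemma Dop_Dstar_eq_Delta:
  fixes F :: "'y::finite Lfun"
  assumes \<theta>: "\<theta> \<in> Theta n j"
  shows "Dop n (Suc j) (Dstar n (Suc j) F) \<theta> = real (n - j) * real CARD('y) * F \<theta> + Delta n j F \<theta>"
proof -
  note \<theta>_facts = Theta_memD[OF \<theta>]
  have "Dstar n (Suc j) F (\<theta>(x \<mapsto> y)) = F \<theta> + (\<Sum>w\<in>dom \<theta>. F (\<theta>(x \<mapsto> y) |` (- {w})))"
    if x: "x \<in> {1..n} - dom \<theta>" for x y
  proof -
    have "\<theta>(x \<mapsto> y) \<in> Theta n (Suc j)"
      using x \<theta>_facts by (auto simp: Theta_def)
    then have "Dstar n (Suc j) F (\<theta>(x \<mapsto> y)) = (\<Sum>w\<in>insert x (dom \<theta>). F (\<theta>(x \<mapsto> y) |` (- {w})))"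
      by (simp add: Dstar_eq_sum_delete)
    also have "\<dots> = F \<theta> + (\<Sum>w\<in>dom \<theta>. F (\<theta>(x \<mapsto> y) |` (- {w})))"
      using x \<theta>_facts by (simp add: restrict_compl_notin_dom)
    finally show ?thesis .
  qed
  then have "Dop n (Suc j) (Dstar n (Suc j) F) \<theta>
      = (\<Sum>x\<in>{1..n} - dom \<theta>. \<Sum>y\<in>UNIV. F \<theta> + (\<Sum>w\<in>dom \<theta>. F (\<theta>(x \<mapsto> y) |` (- {w}))))"
    by (simp add: Dop_Suc_eq_sum_upd[OF \<theta>])
  also have "\<dots> = real (card ({1..n} - dom \<theta>)) * real CARD('y) * F \<theta> + Delta n j F \<theta>"
    by (simp add: sum.distrib Delta_eq_sum_swaps[OF \<theta>])
  also have "card ({1..n} - dom \<theta>) = n - j"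
    using \<theta>_facts by (simp add: card_Diff_subset)
  finally show ?thesis .
qed

lemma Dop_Suc_restrict_compl_eq:
  assumes \<theta>: "\<theta> \<in> Theta n (Suc i)" and w: "w \<in> dom \<theta>"
  shows "Dop n (Suc i) F (\<theta> |` (- {w})) = (\<Sum>y\<in>UNIV. F (\<theta>(w \<mapsto> y))) +
      (\<Sum>x\<in>{1..n} - dom \<theta>. \<Sum>y\<in>UNIV. F (\<theta>(x \<mapsto> y) |` (- {w})))"
proof -
  note \<theta>_facts = Theta_memD[OF \<theta>]
  have "card (dom \<theta> - {w}) = i" using \<theta>_facts w by simp
  then have "\<theta> |` (- {w}) \<in> Theta n i"
    using \<theta>_facts dom_restrict_compl[of \<theta> w] by (auto simp: Theta_def)
  moreover have "{1..n} - dom (\<theta> |` (- {w})) = insert w ({1..n} - dom \<theta>)"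
    using \<theta>_facts w by auto
  ultimately have "Dop n (Suc i) F (\<theta> |` (- {w}))
      = (\<Sum>x\<in>insert w ({1..n} - dom \<theta>). \<Sum>y\<in>UNIV. F ((\<theta> |` (- {w}))(x \<mapsto> y)))"
    by (simp add: Dop_Suc_eq_sum_upd)
  also have "\<dots> = (\<Sum>y\<in>UNIV. F ((\<theta> |` (- {w}))(w \<mapsto> y))) +
      (\<Sum>x\<in>{1..n} - dom \<theta>. \<Sum>y\<in>UNIV. F ((\<theta> |` (- {w}))(x \<mapsto> y)))"
    using w by simp
  also have "\<dots> = (\<Sum>y\<in>UNIV. F (\<theta>(w \<mapsto> y))) +
      (\<Sum>x\<in>{1..n} - dom \<theta>. \<Sum>y\<in>UNIV. F (\<theta>(x \<mapsto> y) |` (- {w})))"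
    using w by (auto simp: restrict_compl_upd_same restrict_compl_upd_other intro!: sum.cong)
  finally show ?thesis .
qed

lemma Dstar_Dop_eq_resample_Delta:
  fixes F :: "'y::finite Lfun"
  assumes \<theta>: "\<theta> \<in> Theta n j"
  shows "Dstar n j (Dop n j F) \<theta> = resample F \<theta> + Delta n j F \<theta>"
proof (cases j)
  case 0
  then have "dom \<theta> = {}" using Theta_memD[OF \<theta>] by auto
  moreover have "Dop n j F = 0" using 0 by (simp add: Dop_def fun_eq_iff)
  ultimately show ?thesis
    using \<theta> by (simp add: Dstar_def resample_def Delta_eq_sum_swaps)
next
  case (Suc i)
  with \<theta> have "\<theta> \<in> Theta n (Suc i)" by simp
  then have "Dstar n j (Dop n j F) \<theta> = (\<Sum>w\<in>dom \<theta>. (\<Sum>y\<in>UNIV. F (\<theta>(w \<mapsto> y))) +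
      (\<Sum>x\<in>{1..n} - dom \<theta>. \<Sum>y\<in>UNIV. F (\<theta>(x \<mapsto> y) |` (- {w}))))"
    using Suc by (simp add: Dstar_eq_sum_delete Dop_Suc_restrict_compl_eq)
  also have "\<dots> = resample F \<theta> +
      (\<Sum>w\<in>dom \<theta>. \<Sum>x\<in>{1..n} - dom \<theta>. \<Sum>y\<in>UNIV. F (\<theta>(x \<mapsto> y) |` (- {w})))"
    by (simp add: sum.distrib resample_def)
  also have "(\<Sum>w\<in>dom \<theta>. \<Sum>x\<in>{1..n} - dom \<theta>. \<Sum>y\<in>UNIV. F (\<theta>(x \<mapsto> y) |` (- {w})))
      = Delta n j F \<theta>"
    unfolding Delta_eq_sum_swaps[OF \<theta>] by (subst sum.swap) (rule sum.cong[OF refl], rule sum.swap)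
  finally show ?thesis .
qed

lemma Dop_Dstar_commute:
  fixes F :: "'y::finite Lfun"
  assumes F: "Theta_supported n j F"
  shows "Dop n (Suc j) (Dstar n (Suc j) F)
    = (\<lambda>\<theta>. Dstar n j (Dop n j F) \<theta> + real (n - j) * real CARD('y) * F \<theta> - resample F \<theta>)"
proof
  fix \<theta>
  show "Dop n (Suc j) (Dstar n (Suc j) F) \<theta>
    = Dstar n j (Dop n j F) \<theta> + real (n - j) * real CARD('y) * F \<theta> - resample F \<theta>"
  proof (cases "\<theta> \<in> Theta n j")
    case True
    then show ?thesis by (simp add: Dop_Dstar_eq_Delta Dstar_Dop_eq_resample_Delta)
  next
    case False
    then show ?thesis using F resample_Theta_supported[OF F]
      by (simp add: Theta_supported_def Dop_def Dstar_def)
  qed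
qed

lemma Delta_eq_Dop_Dstar:
  fixes F :: "'y::finite Lfun"
  assumes F: "Theta_supported n h F"
  shows "Delta n h F = (\<lambda>\<theta>. Dop n (Suc h) (Dstar n (Suc h) F) \<theta> - real (n - h) * real CARD('y) * F \<theta>)"
proof
  fix \<theta>
  show "Delta n h F \<theta> = Dop n (Suc h) (Dstar n (Suc h) F) \<theta> - real (n - h) * real CARD('y) * F \<theta>"
  proof (cases "\<theta> \<in> Theta n h")
    case True
    then show ?thesis by (simp add: Dop_Dstar_eq_Delta)
  next
    case False
    then show ?thesis using F by (simp add: Theta_supported_def Dop_def Delta_def)
  qed
qed

lemma sum_sum_remove_swap:
  fixes f :: "'a \<Rightarrow> 'a \<Rightarrow> 'b::ab_group_add"
  assumes "finite A"
  shows "(\<Sum>z\<in>A. \<Sum>w\<in>A - {z}. f z w) = (\<Sum>w\<in>A. \<Sum>z\<in>A - {w}. f z w)"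
proof -
  have "(\<Sum>z\<in>A. \<Sum>w\<in>A - {z}. f z w) = (\<Sum>z\<in>A. \<Sum>w\<in>A. f z w) - (\<Sum>z\<in>A. f z z)"
    using assms by (simp add: sum_diff1 sum_subtractf)
  also have "\<dots> = (\<Sum>w\<in>A. \<Sum>z\<in>A. f z w) - (\<Sum>w\<in>A. f w w)"
    by (subst sum.swap) (rule refl)
  also have "\<dots> = (\<Sum>w\<in>A. \<Sum>z\<in>A - {w}. f z w)"
    using assms by (simp add: sum_diff1 sum_subtractf)
  finally show ?thesis .
qed

lemma Dstar_upd_eq:
  assumes \<theta>: "\<theta> \<in> Theta n j" and j: "1 \<le> j" and z: "z \<in> dom \<theta>"
  shows "Dstar n j G (\<theta>(z \<mapsto> y))
    = G (\<theta> |` (- {z})) + (\<Sum>w\<in>dom \<theta> - {z}. G ((\<theta> |` (- {w}))(z \<mapsto> y)))"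
proof -
  have "dom (\<theta>(z \<mapsto> y)) = dom \<theta>" using z by auto
  then have "\<theta>(z \<mapsto> y) \<in> Theta n j" using \<theta> by (simp add: Theta_def)
  then have "Dstar n j G (\<theta>(z \<mapsto> y)) = (\<Sum>w\<in>dom \<theta>. G (\<theta>(z \<mapsto> y) |` (- {w})))"
    using j z by (simp add: Dstar_eq_sum_delete insert_absorb)
  also have "\<dots> = G (\<theta>(z \<mapsto> y) |` (- {z})) + (\<Sum>w\<in>dom \<theta> - {z}. G (\<theta>(z \<mapsto> y) |` (- {w})))"
    using z Theta_memD(1)[OF \<theta>] by (simp add: sum.remove)
  also have "\<dots> = G (\<theta> |` (- {z})) + (\<Sum>w\<in>dom \<theta> - {z}. G ((\<theta> |` (- {w}))(z \<mapsto> y)))"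
    by (auto simp: restrict_compl_upd_other intro!: sum.cong)
  finally show ?thesis .
qed

text \<open>The coordinate deleted by \<open>D\<^sup>*\<close> contributes \<open>|Y| D\<^sup>* G\<close>; the pairs of distinct
  coordinates regroup into \<open>D\<^sup>* (resample G)\<close>.\<close>
lemma resample_Dstar:
  fixes G :: "'y::finite Lfun"
  assumes j: "1 \<le> j" and G: "resample G = (\<lambda>\<theta>. c * G \<theta>)"
  shows "resample (Dstar n j G) = (\<lambda>\<theta>. (real CARD('y) + c) * Dstar n j G \<theta>)"
proof
  fix \<theta> :: "'y pfun"
  show "resample (Dstar n j G) \<theta> = (real CARD('y) + c) * Dstar n j G \<theta>"
  proof (cases "\<theta> \<in> Theta n j")
    case False
    then show ?thesis
      using resample_Theta_supported[OF Theta_supported_Dstar, of n j G]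
      by (simp add: Theta_supported_def Dstar_def)
  next
    case True
    note \<theta>_facts = Theta_memD[OF True]
    have "resample (Dstar n j G) \<theta> = (\<Sum>z\<in>dom \<theta>. \<Sum>y\<in>UNIV. G (\<theta> |` (- {z})) +
         (\<Sum>w\<in>dom \<theta> - {z}. G ((\<theta> |` (- {w}))(z \<mapsto> y))))"
      unfolding resample_def by (intro sum.cong refl Dstar_upd_eq[OF True j]) assumption
    also have "\<dots> = real CARD('y) * (\<Sum>z\<in>dom \<theta>. G (\<theta> |` (- {z}))) +
        (\<Sum>z\<in>dom \<theta>. \<Sum>w\<in>dom \<theta> - {z}. \<Sum>y\<in>UNIV. G ((\<theta> |` (- {w}))(z \<mapsto> y)))"
      by (simp add: sum.distrib sum_distrib_left sum.swap[of _ UNIV])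
    also have "(\<Sum>z\<in>dom \<theta>. \<Sum>w\<in>dom \<theta> - {z}. \<Sum>y\<in>UNIV. G ((\<theta> |` (- {w}))(z \<mapsto> y)))
        = (\<Sum>w\<in>dom \<theta>. resample G (\<theta> |` (- {w})))"
      by (subst sum_sum_remove_swap[OF \<theta>_facts(1)]) (simp only: resample_def dom_restrict_compl)
    also have "\<dots> = c * (\<Sum>w\<in>dom \<theta>. G (\<theta> |` (- {w})))"
      by (simp add: G sum_distrib_left)
    finally show ?thesis
      using Dstar_eq_sum_delete[OF True j, of G] by (simp add: algebra_simps)
  qed
qed

section \<open>The spaces \<open>P\<close>\<close>

lemma Theta_supported_fundamental:
  fixes q :: "'y::finite \<Rightarrow> 'y \<Rightarrow> real"
  assumes "F \<in> fundamental q m lam b A" "A \<subseteq> {1..n}" "card A = j"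
  shows "Theta_supported n j F"
proof -
  obtain Fj :: "nat \<Rightarrow> 'y \<Rightarrow> real"
    where F: "F = (\<lambda>\<theta>. if dom \<theta> = A then (\<Prod>j\<in>A. Fj j (the (\<theta> j))) else 0)"
    using assms(1) unfolding fundamental_def by blast
  have "F \<theta> = 0" if "\<theta> \<notin> Theta n j" for \<theta>
  proof -
    have "dom \<theta> \<noteq> A" using that assms(2,3) by (auto simp: Theta_def)
    then show ?thesis by (simp add: F)
  qed
  then show ?thesis by (simp add: Theta_supported_def)
qed

lemma sum_prod_upd_Wsp:
  fixes q :: "'y::finite \<Rightarrow> 'y \<Rightarrow> real"
  assumes ssi: "symmetric_stochastic_irreducible q" and ee: "eigen_enum q m lam"
    and Fj: "\<forall>j\<in>A. ij j \<le> m \<and> Fj j \<in> Wsp q lam (ij j)"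
    and finA: "finite A" and z: "z \<in> A" and dom: "dom \<theta> = A"
  shows "(\<Sum>y\<in>UNIV. \<Prod>i\<in>A. Fj i (the ((\<theta>(z \<mapsto> y)) i)))
    = (if ij z = 0 then real CARD('y) * (\<Prod>i\<in>A. Fj i (the (\<theta> i))) else 0)"
proof -
  define R where "R = (\<Prod>i\<in>A - {z}. Fj i (the (\<theta> i)))"
  have split: "(\<Prod>i\<in>A. Fj i (the ((\<theta>(z \<mapsto> y)) i))) = Fj z y * R" for y
  proof -
    have "(\<Prod>i\<in>A. Fj i (the ((\<theta>(z \<mapsto> y)) i)))
        = Fj z y * (\<Prod>i\<in>A - {z}. Fj i (the ((\<theta>(z \<mapsto> y)) i)))"
      using z finA by (simp add: prod.remove)
    also have "(\<Prod>i\<in>A - {z}. Fj i (the ((\<theta>(z \<mapsto> y)) i))) = R"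
      unfolding R_def by (intro prod.cong refl) auto
    finally show ?thesis .
  qed
  have "\<theta>(z \<mapsto> the (\<theta> z)) = \<theta>" using z dom by auto
  then have "(\<Prod>i\<in>A. Fj i (the (\<theta> i))) = Fj z (the (\<theta> z)) * R"
    using split[of "the (\<theta> z)"] by simp
  moreover have "(\<Sum>y\<in>UNIV. Fj z y) = (if ij z = 0 then real CARD('y) * Fj z (the (\<theta> z)) else 0)"
    using Fj z by (simp add: sum_Wsp[OF ssi ee])
  ultimately show ?thesis unfolding split by (simp add: sum_distrib_right[symmetric])
qed

lemma resample_fundamental:
  fixes q :: "'y::finite \<Rightarrow> 'y \<Rightarrow> real"
  assumes ssi: "symmetric_stochastic_irreducible q" and ee: "eigen_enum q m lam"
    and F: "F \<in> fundamental q m lam b A" and finA: "finite A"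
  shows "resample F = (\<lambda>\<theta>. real CARD('y) * of_int (b 0) * F \<theta>)"
proof
  fix \<theta> :: "'y pfun"
  obtain Fj :: "nat \<Rightarrow> 'y \<Rightarrow> real" and ij :: "nat \<Rightarrow> nat" where
    Fj: "\<forall>j\<in>A. ij j \<le> m \<and> Fj j \<in> Wsp q lam (ij j)" and
    type: "\<forall>i\<le>m. int (card {j\<in>A. ij j = i}) = b i" and
    F_eq: "F = (\<lambda>\<theta>. if dom \<theta> = A then (\<Prod>j\<in>A. Fj j (the (\<theta> j))) else 0)"
    using F unfolding fundamental_def by blast
  show "resample F \<theta> = real CARD('y) * of_int (b 0) * F \<theta>"
  proof (cases "dom \<theta> = A")
    case False
    then have "F (\<theta>(z \<mapsto> y)) = 0" if "z \<in> dom \<theta>" for z y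
      using that by (auto simp: F_eq insert_absorb)
    then show ?thesis using False by (simp add: resample_def F_eq)
  next
    case True
    then have "resample F \<theta> = (\<Sum>z\<in>A. \<Sum>y\<in>UNIV. \<Prod>i\<in>A. Fj i (the ((\<theta>(z \<mapsto> y)) i)))"
      by (simp add: resample_def F_eq insert_absorb)
    also have "\<dots> = (\<Sum>z\<in>A. if ij z = 0 then real CARD('y) * F \<theta> else 0)"
    proof (rule sum.cong[OF refl])
      fix z assume "z \<in> A"
      show "(\<Sum>y\<in>UNIV. \<Prod>i\<in>A. Fj i (the ((\<theta>(z \<mapsto> y)) i)))
          = (if ij z = 0 then real CARD('y) * F \<theta> else 0)"
        using sum_prod_upd_Wsp[OF ssi ee Fj finA \<open>z \<in> A\<close> True] True by (simp only: F_eq if_True simp_thms)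
    qed
    also have "\<dots> = real (card {z\<in>A. ij z = 0}) * (real CARD('y) * F \<theta>)"
      using finA by (simp add: sum.If_cases Int_def)
    also have "real (card {z\<in>A. ij z = 0}) = of_int (b 0)"
      using type by (metis of_int_of_nat_eq zero_le)
    finally show ?thesis by simp
  qed
qed

lemma module_pointwise_scale: "module (\<lambda>(c::real) (f::'a \<Rightarrow> real) x. c * f x)"
  by unfold_locales (auto simp: fun_eq_iff algebra_simps plus_fun_def)

lemma Pkb_resample:
  fixes q :: "'y::finite \<Rightarrow> 'y \<Rightarrow> real"
  assumes ssi: "symmetric_stochastic_irreducible q" and ee: "eigen_enum q m lam"
    and F: "F \<in> Pkb q m lam n j b"
  shows "Theta_supported n j F \<and> resample F = (\<lambda>\<theta>. real CARD('y) * of_int (b 0) * F \<theta>)"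
    (is "?P F")
proof -
  have "F \<in> module.span (\<lambda>(c::real) (f::'y Lfun) x. c * f x)
      (\<Union>A\<in>{A. A \<subseteq> {1..n} \<and> card A = j}. fundamental q m lam b A)"
    using F by (simp add: Pkb_def fun_span_def)
  then show ?thesis
  proof (rule module.span_induct_alt[OF module_pointwise_scale, where h = ?P])
    show "?P 0" by (simp add: Theta_supported_def resample_def fun_eq_iff)
  next
    fix c :: real and G H :: "'y Lfun"
    assume "G \<in> (\<Union>A\<in>{A. A \<subseteq> {1..n} \<and> card A = j}. fundamental q m lam b A)" and H: "?P H"
    then obtain A where A: "A \<subseteq> {1..n}" "card A = j" "G \<in> fundamental q m lam b A" by blast
    have "finite A" using A(1) by (rule finite_subset) simp
    then have G: "?P G"
      using Theta_supported_fundamental[OF A(3,1,2)] resample_fundamental[OF ssi ee A(3)] by simp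
    have "resample (\<lambda>\<theta>. c * G \<theta> + H \<theta>) = (\<lambda>\<theta>. c * resample G \<theta> + resample H \<theta>)"
      by (simp add: resample_def sum.distrib sum_distrib_left fun_eq_iff)
    then show "?P ((\<lambda>\<theta>. c * G \<theta>) + H)"
      using G H unfolding plus_fun_def by (simp add: Theta_supported_def fun_eq_iff algebra_simps)
  qed
qed

lemma Phk_resample:
  fixes q :: "'y::finite \<Rightarrow> 'y \<Rightarrow> real"
  assumes ssi: "symmetric_stochastic_irreducible q" and ee: "eigen_enum q m lam"
    and "F \<in> Phk q m lam n k d b"
  shows "Theta_supported n (k + d) F \<and> resample F = (\<lambda>\<theta>. real CARD('y) * of_int (b 0) * F \<theta>)"
  using assms(3)
proof (induction d arbitrary: b F)
  case 0
  then have "F \<in> Pkb q m lam n k b" by simp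
  then show ?case by (simp add: Pkb_resample[OF ssi ee])
next
  case (Suc d)
  then obtain G where G: "G \<in> Phk q m lam n k d (tprime b)" and F: "F = Dstar n (k + Suc d) G"
    by auto
  have "resample G = (\<lambda>\<theta>. (real CARD('y) * of_int (b 0) - real CARD('y)) * G \<theta>)"
    using Suc.IH[OF G] by (simp add: tprime_def algebra_simps)
  then have "resample F = (\<lambda>\<theta>. (real CARD('y) + (real CARD('y) * of_int (b 0) - real CARD('y))) * F \<theta>)"
    unfolding F by (intro resample_Dstar) simp_all
  then show ?case by (simp add: F Theta_supported_Dstar)
qed

lemma Phk_Dop_Dstar:
  fixes q :: "'y::finite \<Rightarrow> 'y \<Rightarrow> real"
  assumes ssi: "symmetric_stochastic_irreducible q" and ee: "eigen_enum q m lam"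
    and "F \<in> Phk q m lam n k d b" and "k + d < n"
  shows "Dop n (Suc (k + d)) (Dstar n (Suc (k + d)) F)
    = (\<lambda>\<theta>. real CARD('y) * (real d + 1) * (real n - real k - of_int (b 0)) * F \<theta>)"
  using assms(3,4)
proof (induction d arbitrary: b F)
  case 0
  then have "F \<in> Pkb q m lam n k b" and DF: "Dop n k F = 0" by auto
  note F = Pkb_resample[OF ssi ee this(1)]
  have "Dstar n k (Dop n k F) = 0" by (simp add: DF Dstar_def fun_eq_iff)
  then show ?case
    using 0 F by (simp add: Dop_Dstar_commute fun_eq_iff algebra_simps)
next
  case (Suc d)
  then obtain G where G: "G \<in> Phk q m lam n k d (tprime b)" and F: "F = Dstar n (Suc (k + d)) G"
    by auto
  note F_resample = Phk_resample[OF ssi ee Suc.prems(1)]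
  have "Dop n (Suc (k + d)) F
      = (\<lambda>\<theta>. real CARD('y) * (real d + 1) * (real n - real k - of_int (b 0) + 1) * G \<theta>)"
    using Suc.IH[OF G] Suc.prems(2) F by (simp add: tprime_def algebra_simps)
  then have "Dstar n (Suc (k + d)) (Dop n (Suc (k + d)) F)
      = (\<lambda>\<theta>. real CARD('y) * (real d + 1) * (real n - real k - of_int (b 0) + 1) * F \<theta>)"
    by (simp add: Dstar_scale F)
  then show ?case
    using F_resample Suc.prems(2)
    by (simp add: Dop_Dstar_commute fun_eq_iff algebra_simps)
qed

lemma tsize_eq_head_plus_tlen: "tsize m a = a 0 + tlen m a"
  by (simp add: tsize_def tlen_def sum.atLeast_Suc_atMost)

theorem corollary7p9:
  fixes q :: "'y::finite \<Rightarrow> 'y \<Rightarrow> real"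
    and m n h k :: nat and lam :: "nat \<Rightarrow> real" and a :: "nat \<Rightarrow> int"
    and F :: "'y Lfun"
  assumes "symmetric_stochastic_irreducible q"
    and "eigen_enum q m lam"
    and "k \<le> h" and "h \<le> n - 1" and "1 \<le> n"
    and "\<forall>i\<le>m. 0 \<le> a i"
    and "tsize m a = int h + 1"
    and "tlen m a \<le> int k"
    and "F \<in> Phbk q m lam n h (tprime a) k"
  shows "Delta n h F = (\<lambda>\<theta>. (real CARD('y) * (real n + of_int (tlen m a) - real k - real h)
                                * (real h - real k + 1) - real CARD('y) * (real n - real h)) * F \<theta>)"
proof -
  have F: "F \<in> Phk q m lam n k (h - k) (tprime a)" using assms(9) by (simp add: Phbk_def)
  have hk: "k + (h - k) = h" and "h < n" using assms(3-5) by auto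
  have "Theta_supported n h F" using Phk_resample[OF assms(1,2) F] hk by simp
  then have "Delta n h F = (\<lambda>\<theta>. Dop n (Suc h) (Dstar n (Suc h) F) \<theta> - real (n - h) * real CARD('y) * F \<theta>)"
    by (rule Delta_eq_Dop_Dstar)
  also have "Dop n (Suc h) (Dstar n (Suc h) F)
      = (\<lambda>\<theta>. real CARD('y) * (real (h - k) + 1) * (real n - real k - of_int (tprime a 0)) * F \<theta>)"
    using Phk_Dop_Dstar[OF assms(1,2) F] hk \<open>h < n\<close> by simp
  also have "of_int (tprime a 0) = real h - of_int (tlen m a)"
    using assms(7) by (simp add: tprime_def tsize_eq_head_plus_tlen algebra_simps)
  finally show ?thesis
    using assms(3) \<open>h < n\<close> by (simp add: fun_eq_iff algebra_simps)
qed

end
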